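(* Let $A$ be a Noetherian skew brace (every ascending chain of ideals of $A$ is eventually stationary). Then the set of minimal prime ideals of $A$ is finite.
   Context: A (left) skew brace is a triple $(A,+,\circ)$ where $(A,+)$ and $(A,\circ)$ are groups such that $a\circ(b+c)=a\circ b-a+a\circ c$ for all $a,b,c$; common identity $e$. Put $\lambda_a(b)=-a+a\circ b$, $a*b=-a+a\circ b-b$. An ideal is a normal subgroup $I$ of both $(A,+)$ and $(A,\circ)$ with $\lambda_a(I)\subseteq I$ for all $a$. For subsets $I,J$, $I*J=\{i*j\mid i\in I,j\in J\}$. A prime ideal is a proper ideal $P$ such that for any subsets $I,J$ of $A$, $I*J\subseteq P$ implies $I\subseteq P$ or $J\subseteq P$. A minimal prime ideal is a prime ideal containing no strictly smaller prime ideal. *)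

theory Defs
  imports "HOL-Algebra.Coset"
begin

text \<open>A skew brace on the carrier A with addition p, multiplication c (the circle operation)
  and common identity e.\<close>

definition grp :: "'a set \<Rightarrow> ('a \<Rightarrow> 'a \<Rightarrow> 'a) \<Rightarrow> 'a \<Rightarrow> 'a monoid" where
  "grp A f e = \<lparr>carrier = A, mult = f, one = e\<rparr>"

definition bneg :: "'a set \<Rightarrow> ('a \<Rightarrow> 'a \<Rightarrow> 'a) \<Rightarrow> 'a \<Rightarrow> 'a \<Rightarrow> 'a" where
  "bneg A p e a = inv\<^bsub>grp A p e\<^esub> a"

definition skew_brace :: "'a set \<Rightarrow> ('a \<Rightarrow> 'a \<Rightarrow> 'a) \<Rightarrow> ('a \<Rightarrow> 'a \<Rightarrow> 'a) \<Rightarrow> 'a \<Rightarrow> bool" where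
  "skew_brace A p c e \<longleftrightarrow> group (grp A p e) \<and> group (grp A c e) \<and>
     (\<forall>a\<in>A. \<forall>b\<in>A. \<forall>d\<in>A. c a (p b d) = p (p (c a b) (bneg A p e a)) (c a d))"

definition blambda :: "'a set \<Rightarrow> ('a \<Rightarrow> 'a \<Rightarrow> 'a) \<Rightarrow> ('a \<Rightarrow> 'a \<Rightarrow> 'a) \<Rightarrow> 'a \<Rightarrow> 'a \<Rightarrow> 'a \<Rightarrow> 'a" where
  "blambda A p c e a b = p (bneg A p e a) (c a b)"

definition bstar :: "'a set \<Rightarrow> ('a \<Rightarrow> 'a \<Rightarrow> 'a) \<Rightarrow> ('a \<Rightarrow> 'a \<Rightarrow> 'a) \<Rightarrow> 'a \<Rightarrow> 'a \<Rightarrow> 'a \<Rightarrow> 'a" where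
  "bstar A p c e a b = p (p (bneg A p e a) (c a b)) (bneg A p e b)"

definition bstar_set :: "'a set \<Rightarrow> ('a \<Rightarrow> 'a \<Rightarrow> 'a) \<Rightarrow> ('a \<Rightarrow> 'a \<Rightarrow> 'a) \<Rightarrow> 'a \<Rightarrow> 'a set \<Rightarrow> 'a set \<Rightarrow> 'a set" where
  "bstar_set A p c e I J = {bstar A p c e i j | i j. i \<in> I \<and> j \<in> J}"

definition brace_ideal :: "'a set \<Rightarrow> ('a \<Rightarrow> 'a \<Rightarrow> 'a) \<Rightarrow> ('a \<Rightarrow> 'a \<Rightarrow> 'a) \<Rightarrow> 'a \<Rightarrow> 'a set \<Rightarrow> bool" where
  "brace_ideal A p c e I \<longleftrightarrow> normal I (grp A p e) \<and> normal I (grp A c e) \<and>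
     (\<forall>a\<in>A. blambda A p c e a ` I \<subseteq> I)"

definition prime_ideal :: "'a set \<Rightarrow> ('a \<Rightarrow> 'a \<Rightarrow> 'a) \<Rightarrow> ('a \<Rightarrow> 'a \<Rightarrow> 'a) \<Rightarrow> 'a \<Rightarrow> 'a set \<Rightarrow> bool" where
  "prime_ideal A p c e P \<longleftrightarrow> brace_ideal A p c e P \<and> P \<noteq> A \<and>
     (\<forall>I J. I \<subseteq> A \<longrightarrow> J \<subseteq> A \<longrightarrow> bstar_set A p c e I J \<subseteq> P \<longrightarrow> I \<subseteq> P \<or> J \<subseteq> P)"

definition minimal_prime_ideal :: "'a set \<Rightarrow> ('a \<Rightarrow> 'a \<Rightarrow> 'a) \<Rightarrow> ('a \<Rightarrow> 'a \<Rightarrow> 'a) \<Rightarrow> 'a \<Rightarrow> 'a set \<Rightarrow> bool" where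
  "minimal_prime_ideal A p c e P \<longleftrightarrow> prime_ideal A p c e P \<and>
     \<not> (\<exists>Q. prime_ideal A p c e Q \<and> Q \<subset> P)"

definition noetherian_brace :: "'a set \<Rightarrow> ('a \<Rightarrow> 'a \<Rightarrow> 'a) \<Rightarrow> ('a \<Rightarrow> 'a \<Rightarrow> 'a) \<Rightarrow> 'a \<Rightarrow> bool" where
  "noetherian_brace A p c e \<longleftrightarrow>
     (\<forall>f :: nat \<Rightarrow> 'a set. (\<forall>n. brace_ideal A p c e (f n)) \<and> (\<forall>n. f n \<subseteq> f (Suc n))
        \<longrightarrow> (\<exists>N. \<forall>n\<ge>N. f n = f N))"

end

theory Submission
  imports Defs "HOL-Algebra.Generated_Groups"
begin

text \<open>Noetherian induction on ideals: for every ideal \<open>I\<close> there is a finite set of primes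
  such that every prime containing \<open>I\<close> contains one of them. If \<open>I\<close> is prime, take \<open>{I}\<close>;
  if \<open>I = A\<close>, no prime contains \<open>I\<close>; otherwise \<open>X * Y \<subseteq> I\<close> for some \<open>X, Y \<not>\<subseteq> I\<close>, and
  every prime over \<open>I\<close> contains the strictly larger ideal generated by \<open>I \<union> X\<close> or that
  generated by \<open>I \<union> Y\<close>, so the union of the two finite sets obtained for these works.
  Applied to the least ideal, this finite set contains every minimal prime.\<close>

lemma (in group) normal_Inter:
  assumes "S \<noteq> {}" and "\<And>H. H \<in> S \<Longrightarrow> H \<lhd> G"
  shows "\<Inter>S \<lhd> G"
proof -
  have "subgroup (\<Inter>S) G"
    using assms by (intro subgroups_Inter) (auto intro: normal_imp_subgroup)
  then show ?thesis
    using assms(2) by (auto simp: normal_inv_iff)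
qed

lemma brace_ideal_subset:
  assumes "brace_ideal A p c e I"
  shows "I \<subseteq> A"
  using assms subgroup.subset[OF normal_imp_subgroup]
  by (fastforce simp: brace_ideal_def grp_def)

lemma brace_ideal_carrier:
  assumes "skew_brace A p c e"
  shows "brace_ideal A p c e A"
proof -
  interpret P: group "grp A p e" using assms by (simp add: skew_brace_def)
  interpret C: group "grp A c e" using assms by (simp add: skew_brace_def)
  have "blambda A p c e a b \<in> A" if "a \<in> A" "b \<in> A" for a b
    using that P.m_closed P.inv_closed C.m_closed
    by (simp add: blambda_def bneg_def grp_def)
  then show ?thesis
    using P.normal_self C.normal_self by (auto simp: brace_ideal_def grp_def)
qed

lemma brace_ideal_Inter:
  assumes "skew_brace A p c e" and "S \<noteq> {}" and "\<And>I. I \<in> S \<Longrightarrow> brace_ideal A p c e I"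
  shows "brace_ideal A p c e (\<Inter>S)"
proof -
  interpret P: group "grp A p e" using assms(1) by (simp add: skew_brace_def)
  interpret C: group "grp A c e" using assms(1) by (simp add: skew_brace_def)
  have "\<Inter>S \<lhd> grp A p e" "\<Inter>S \<lhd> grp A c e"
    using assms(2,3) by (auto intro: P.normal_Inter C.normal_Inter simp: brace_ideal_def)
  moreover have "blambda A p c e a ` \<Inter>S \<subseteq> \<Inter>S" if "a \<in> A" for a
    using assms(3) that by (fastforce simp: brace_ideal_def)
  ultimately show ?thesis
    by (simp add: brace_ideal_def)
qed

lemma prime_ideal_imp_brace_ideal: "prime_ideal A p c e P \<Longrightarrow> brace_ideal A p c e P"
  by (simp add: prime_ideal_def)

lemma prime_ideal_psubset:
  assumes "prime_ideal A p c e P"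
  shows "P \<subset> A"
proof -
  have "brace_ideal A p c e P" "P \<noteq> A"
    using assms by (simp_all add: prime_ideal_def)
  then show ?thesis
    using brace_ideal_subset[of A p c e P] by auto
qed

lemma prime_idealD:
  assumes "prime_ideal A p c e P" and "X \<subseteq> A" "Y \<subseteq> A" "bstar_set A p c e X Y \<subseteq> P"
  shows "X \<subseteq> P \<or> Y \<subseteq> P"
  using assms unfolding prime_ideal_def by blast

definition brace_genideal :: "'a set \<Rightarrow> ('a \<Rightarrow> 'a \<Rightarrow> 'a) \<Rightarrow> ('a \<Rightarrow> 'a \<Rightarrow> 'a) \<Rightarrow> 'a \<Rightarrow> 'a set \<Rightarrow> 'a set"
  where "brace_genideal A p c e X = \<Inter>{J. brace_ideal A p c e J \<and> X \<subseteq> J}"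

lemma brace_genideal_ideal:
  assumes "skew_brace A p c e" and "X \<subseteq> A"
  shows "brace_ideal A p c e (brace_genideal A p c e X)"
  unfolding brace_genideal_def
  using assms brace_ideal_carrier[OF assms(1)] by (intro brace_ideal_Inter) auto

lemma brace_genideal_self: "X \<subseteq> brace_genideal A p c e X"
  by (auto simp: brace_genideal_def)

lemma brace_genideal_minimal:
  "brace_ideal A p c e J \<Longrightarrow> X \<subseteq> J \<Longrightarrow> brace_genideal A p c e X \<subseteq> J"
  by (auto simp: brace_genideal_def)

lemma wf_brace_ideal_psupset:
  assumes "noetherian_brace A p c e"
  shows "wf {(J, I). brace_ideal A p c e I \<and> brace_ideal A p c e J \<and> I \<subset> J}"
proof (rule ccontr)
  assume "\<not> ?thesis"
  then obtain f where f: "\<forall>n. brace_ideal A p c e (f n) \<and> f n \<subset> f (Suc n)"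
    unfolding wf_iff_no_infinite_down_chain by blast
  then have "\<forall>n. brace_ideal A p c e (f n)" "\<forall>n. f n \<subseteq> f (Suc n)"
    by auto
  then have "\<exists>N. \<forall>n\<ge>N. f n = f N"
    using assms unfolding noetherian_brace_def by simp
  then obtain N where "\<forall>n\<ge>N. f n = f N" ..
  then have "f (Suc N) = f N"
    using le_Suc_eq by blast
  with f[rule_format, of N] show False
    by simp
qed

lemma noetherian_brace_ideal_induct [consumes 2, case_names step]:
  assumes "noetherian_brace A p c e" and "brace_ideal A p c e I"
    and "\<And>I. brace_ideal A p c e I \<Longrightarrow>
           (\<And>J. brace_ideal A p c e J \<Longrightarrow> I \<subset> J \<Longrightarrow> Q J) \<Longrightarrow> Q I"
  shows "Q I"
  using assms(2)
proof (induction I rule: wf_induct_rule[OF wf_brace_ideal_psupset[OF assms(1)]])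
  case (1 I)
  then show ?case
    using assms(3) by blast
qed

lemma not_prime_brace_ideal_split:
  assumes "skew_brace A p c e" and I: "brace_ideal A p c e I" "I \<noteq> A"
    and "\<not> prime_ideal A p c e I"
  obtains J1 J2 where "brace_ideal A p c e J1" "I \<subset> J1" "brace_ideal A p c e J2" "I \<subset> J2"
    and "\<And>P. prime_ideal A p c e P \<Longrightarrow> I \<subseteq> P \<Longrightarrow> J1 \<subseteq> P \<or> J2 \<subseteq> P"
proof -
  obtain X Y where XY: "X \<subseteq> A" "Y \<subseteq> A" "bstar_set A p c e X Y \<subseteq> I"
    and "\<not> X \<subseteq> I" "\<not> Y \<subseteq> I"
    using assms(2-4) by (auto simp: prime_ideal_def)
  have IA: "I \<subseteq> A"
    using brace_ideal_subset[OF I(1)] .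
  let ?J1 = "brace_genideal A p c e (I \<union> X)"
  let ?J2 = "brace_genideal A p c e (I \<union> Y)"
  show thesis
  proof
    show "brace_ideal A p c e ?J1" "brace_ideal A p c e ?J2"
      using brace_genideal_ideal[OF assms(1)] IA XY by simp_all
    show "I \<subset> ?J1" "I \<subset> ?J2"
      using brace_genideal_self[of "I \<union> X" A p c e] brace_genideal_self[of "I \<union> Y" A p c e]
        \<open>\<not> X \<subseteq> I\<close> \<open>\<not> Y \<subseteq> I\<close> by auto
  next
    fix P
    assume P: "prime_ideal A p c e P" "I \<subseteq> P"
    have "bstar_set A p c e X Y \<subseteq> P"
      using XY(3) P(2) by (rule subset_trans)
    then have "X \<subseteq> P \<or> Y \<subseteq> P"
      by (rule prime_idealD[OF P(1) XY(1,2)])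
    then have "I \<union> X \<subseteq> P \<or> I \<union> Y \<subseteq> P"
      using P(2) by blast
    then show "?J1 \<subseteq> P \<or> ?J2 \<subseteq> P"
      using brace_genideal_minimal[OF prime_ideal_imp_brace_ideal[OF P(1)]] by blast
  qed
qed

lemma finite_primes_below_primes_over:
  assumes "skew_brace A p c e" and "noetherian_brace A p c e" and "brace_ideal A p c e I"
  shows "\<exists>F. finite F \<and> (\<forall>Q\<in>F. prime_ideal A p c e Q) \<and>
           (\<forall>P. prime_ideal A p c e P \<and> I \<subseteq> P \<longrightarrow> (\<exists>Q\<in>F. Q \<subseteq> P))"
  using assms(2,3)
proof (induction I rule: noetherian_brace_ideal_induct)
  case (step I)
  consider "prime_ideal A p c e I" | "I = A" | "I \<noteq> A" "\<not> prime_ideal A p c e I"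
    by blast
  then show ?case
  proof cases
    case 1
    then show ?thesis
      by (intro exI[of _ "{I}"]) auto
  next
    case 2
    have "\<not> I \<subseteq> P" if "prime_ideal A p c e P" for P
      using prime_ideal_psubset[OF that] 2 by auto
    then show ?thesis
      by (intro exI[of _ "{}"]) auto
  next
    case 3
    obtain J1 J2 where J: "brace_ideal A p c e J1" "I \<subset> J1" "brace_ideal A p c e J2" "I \<subset> J2"
      and split: "\<And>P. prime_ideal A p c e P \<Longrightarrow> I \<subseteq> P \<Longrightarrow> J1 \<subseteq> P \<or> J2 \<subseteq> P"
      using not_prime_brace_ideal_split[OF assms(1) step(1) 3] by blast
    obtain F1 where "finite F1" "\<forall>Q\<in>F1. prime_ideal A p c e Q"
        and F1: "\<forall>P. prime_ideal A p c e P \<and> J1 \<subseteq> P \<longrightarrow> (\<exists>Q\<in>F1. Q \<subseteq> P)"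
      using step(2)[OF J(1,2)] by blast
    obtain F2 where "finite F2" "\<forall>Q\<in>F2. prime_ideal A p c e Q"
        and F2: "\<forall>P. prime_ideal A p c e P \<and> J2 \<subseteq> P \<longrightarrow> (\<exists>Q\<in>F2. Q \<subseteq> P)"
      using step(2)[OF J(3,4)] by blast
    have "\<exists>Q\<in>F1 \<union> F2. Q \<subseteq> P" if "prime_ideal A p c e P" "I \<subseteq> P" for P
      using split[OF that] F1[rule_format, of P] F2[rule_format, of P] that(1) by blast
    then show ?thesis
      using \<open>finite F1\<close> \<open>finite F2\<close> \<open>\<forall>Q\<in>F1. _\<close> \<open>\<forall>Q\<in>F2. _\<close>
      by (intro exI[of _ "F1 \<union> F2"]) auto
  qed
qed

theorem corollary4p21:
  fixes A :: "'a set" and p c :: "'a \<Rightarrow> 'a \<Rightarrow> 'a" and e :: 'a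
  assumes "skew_brace A p c e"
    and "noetherian_brace A p c e"
  shows "finite {P. minimal_prime_ideal A p c e P}"
proof -
  let ?I0 = "brace_genideal A p c e {}"
  obtain F where "finite F" and F: "\<forall>Q\<in>F. prime_ideal A p c e Q"
    and below: "\<forall>P. prime_ideal A p c e P \<and> ?I0 \<subseteq> P \<longrightarrow> (\<exists>Q\<in>F. Q \<subseteq> P)"
    using finite_primes_below_primes_over[OF assms brace_genideal_ideal[OF assms(1) empty_subsetI]]
    by blast
  have "P \<in> F" if min: "minimal_prime_ideal A p c e P" for P
  proof -
    have P: "prime_ideal A p c e P"
      using min by (simp add: minimal_prime_ideal_def)
    then have "?I0 \<subseteq> P"
      by (intro brace_genideal_minimal prime_ideal_imp_brace_ideal) simp_all
    then obtain Q where "Q \<in> F" "Q \<subseteq> P"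
      using below P by blast
    moreover have "\<not> Q \<subset> P"
      using min F \<open>Q \<in> F\<close> by (auto simp: minimal_prime_ideal_def)
    ultimately show "P \<in> F"
      by (metis psubsetI)
  qed
  then have "{P. minimal_prime_ideal A p c e P} \<subseteq> F"
    by blast
  then show ?thesis
    using \<open>finite F\<close> by (rule finite_subset)
qed

end
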